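(* Let $L$ be an $r\times n$ $\boldsymbol\rho$-latin rectangle with $r<n$. Then $L$ can be completed to an $n\times n$ $\boldsymbol\rho$-latin square if and only if $\rho_\ell-e_\ell\le n-r$ for all $\ell\in[k]$ and one (equivalently, given the first condition, every one) of the following six conditions holds: (1) $|J|(n-r)\le\sum_{\ell\in[k]}\min\{\rho_\ell-e_\ell,\ \mu_J(\ell)\}$ for all $J\subseteq[n]$; (2) $\sum_{\ell\in K}(\rho_\ell-e_\ell)\le\sum_{j\in[n]}\min\{n-r,\ \mu_K(j)\}$ for all $K\subseteq[k]$; (3) $|J|(n-r)\ge\sum_{\ell\in[k]}\big((\rho_\ell-e_\ell)\dot-\mu_{\bar J}(\ell)\big)$ for all $J\subseteq[n]$; (4) $\sum_{\ell\in K}(\rho_\ell-e_\ell)\ge\sum_{j\in[n]}\big((n-r)\dot-\mu_{\bar K}(j)\big)$ for all $K\subseteq[k]$; (5) $|J|(n-r)\le\sum_{\ell\in K}(\rho_\ell-e_\ell)+\mu_J(\bar K)$ for all $J\subseteq[n]$ and $K\subseteq[k]$; (6) $\sum_{\ell\in K}(\rho_\ell-e_\ell)\le|J|(n-r)+\mu_K(\bar J)$ for all $J\subseteq[n]$ and $K\subseteq[k]$.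
   Context: Let $n,k$ be positive integers. Let $\boldsymbol\rho=(\rho_1,\dots,\rho_k)$ be integers with $1\le\rho_\ell\le n\le k$ and $\sum_{\ell\in[k]}\rho_\ell=n^2$. The symbols are the elements of $[k]$. A $\boldsymbol\rho$-latin square of order $n$ is an $n\times n$ array with entries in $[k]$, each symbol at most once per row and per column, and symbol $\ell$ occurring exactly $\rho_\ell$ times. An $r\times s$ $\boldsymbol\rho$-latin rectangle is an $r\times s$ array with entries in $[k]$, each symbol at most once per row and per column, and symbol $\ell$ occurring at most $\rho_\ell$ times. Completing it means finding a $\boldsymbol\rho$-latin square of order $n$ whose top-left subarray is $L$. Here $s=n$, so the columns are $[n]$. $e_\ell$ is the number of occurrences of $\ell$ in $L$. For $j\in[n]$, $\ell\in[k]$, $J\subseteq[n]$, $K\subseteq[k]$: - $\mu_K(j)$ is the number of symbols of $K$ not occurring in column $j$ of $L$; - $\mu_J(\ell)$ is the number of columns in $J$ not containing $\ell$; - $\mu_J(K)=\sum_{\ell\in K}\mu_J(\ell)$ and $\mu_K(J)=\sum_{j\in J}\mu_K(j)$. $\bar J=[n]\setminus J$, $\bar K=[k]\setminus K$, and $x\dot- y=\max\{0,x-y\}$. *)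

theory Defs
  imports Main
begin

text \<open>Arrays are functions nat => nat => nat; rows and columns are indexed by
  {1..r} and {1..s}; symbols are the elements of {1..k}. Values outside the
  index range are irrelevant.\<close>

definition occ :: "nat \<Rightarrow> nat \<Rightarrow> (nat \<Rightarrow> nat \<Rightarrow> nat) \<Rightarrow> nat \<Rightarrow> nat" where
  "occ r s L l = card {(i, j). i \<in> {1..r} \<and> j \<in> {1..s} \<and> L i j = l}"

definition rho_latin_rectangle ::
  "nat \<Rightarrow> nat \<Rightarrow> (nat \<Rightarrow> nat) \<Rightarrow> nat \<Rightarrow> nat \<Rightarrow> (nat \<Rightarrow> nat \<Rightarrow> nat) \<Rightarrow> bool" where
  "rho_latin_rectangle n k rho r s L \<longleftrightarrow>
     (\<forall>i\<in>{1..r}. \<forall>j\<in>{1..s}. L i j \<in> {1..k}) \<and>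
     (\<forall>i\<in>{1..r}. \<forall>j\<in>{1..s}. \<forall>j'\<in>{1..s}. j \<noteq> j' \<longrightarrow> L i j \<noteq> L i j') \<and>
     (\<forall>j\<in>{1..s}. \<forall>i\<in>{1..r}. \<forall>i'\<in>{1..r}. i \<noteq> i' \<longrightarrow> L i j \<noteq> L i' j) \<and>
     (\<forall>l\<in>{1..k}. occ r s L l \<le> rho l)"

definition rho_latin_square ::
  "nat \<Rightarrow> nat \<Rightarrow> (nat \<Rightarrow> nat) \<Rightarrow> (nat \<Rightarrow> nat \<Rightarrow> nat) \<Rightarrow> bool" where
  "rho_latin_square n k rho S \<longleftrightarrow>
     (\<forall>i\<in>{1..n}. \<forall>j\<in>{1..n}. S i j \<in> {1..k}) \<and>
     (\<forall>i\<in>{1..n}. \<forall>j\<in>{1..n}. \<forall>j'\<in>{1..n}. j \<noteq> j' \<longrightarrow> S i j \<noteq> S i j') \<and>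
     (\<forall>j\<in>{1..n}. \<forall>i\<in>{1..n}. \<forall>i'\<in>{1..n}. i \<noteq> i' \<longrightarrow> S i j \<noteq> S i' j) \<and>
     (\<forall>l\<in>{1..k}. occ n n S l = rho l)"

definition completable ::
  "nat \<Rightarrow> nat \<Rightarrow> (nat \<Rightarrow> nat) \<Rightarrow> nat \<Rightarrow> nat \<Rightarrow> (nat \<Rightarrow> nat \<Rightarrow> nat) \<Rightarrow> bool" where
  "completable n k rho r s L \<longleftrightarrow>
     (\<exists>S. rho_latin_square n k rho S \<and> (\<forall>i\<in>{1..r}. \<forall>j\<in>{1..s}. S i j = L i j))"

definition mu_col :: "nat \<Rightarrow> (nat \<Rightarrow> nat \<Rightarrow> nat) \<Rightarrow> nat set \<Rightarrow> nat \<Rightarrow> nat" where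
  "mu_col r L K j = card {l\<in>K. \<forall>i\<in>{1..r}. L i j \<noteq> l}"

definition mu_sym :: "nat \<Rightarrow> (nat \<Rightarrow> nat \<Rightarrow> nat) \<Rightarrow> nat set \<Rightarrow> nat \<Rightarrow> nat" where
  "mu_sym r L J l = card {j\<in>J. \<forall>i\<in>{1..r}. L i j \<noteq> l}"

end

theory Submission
  imports Defs
begin

text \<open>Completing \<open>L\<close> amounts to choosing, for every column \<open>j\<close>, the \<open>n - r\<close> symbols that fill
  its empty cells: a bipartite graph between columns and symbols, using only symbols missing from
  the column, in which every column has degree \<open>n - r\<close> and symbol \<open>l\<close> has degree
  \<open>rho l - e l\<close>. When all these degrees are at most \<open>n - r\<close> (the first condition), Koenig's
  edge colouring theorem splits such a graph into \<open>n - r\<close> matchings, which become the missing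
  rows. A graph with these degrees exists iff condition (1) holds; this supply--demand theorem is
  proved by induction on the total supply, using that the capacity of a set of columns is
  submodular, so that the tight sets have a largest element. Because the degrees sum to
  \<open>n (n - r)\<close>, conditions (2)--(6) are rewritings of (1): the minima are attained by a best
  choice of \<open>K\<close> or \<open>J\<close>, and complementing \<open>J\<close> or \<open>K\<close> trades each sum for its complement.\<close>

section \<open>Degree-constrained subgraphs of bipartite multigraphs\<close>

definition cut_capacity :: "'b set \<Rightarrow> ('a \<Rightarrow> 'b \<Rightarrow> nat) \<Rightarrow> ('b \<Rightarrow> nat) \<Rightarrow> 'a set \<Rightarrow> nat" where
  "cut_capacity Y c b J = (\<Sum>y\<in>Y. min (b y) (\<Sum>x\<in>J. c x y))"

lemma cut_capacity_submodular:
  assumes "finite A" "finite B"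
  shows "cut_capacity Y c b (A \<union> B) + cut_capacity Y c b (A \<inter> B)
    \<le> cut_capacity Y c b A + cut_capacity Y c b B"
proof -
  have "min (b y) (\<Sum>x\<in>A \<union> B. c x y) + min (b y) (\<Sum>x\<in>A \<inter> B. c x y)
      \<le> min (b y) (\<Sum>x\<in>A. c x y) + min (b y) (\<Sum>x\<in>B. c x y)" for y
  proof -
    have "(\<Sum>x\<in>A \<inter> B. c x y) \<le> (\<Sum>x\<in>A. c x y)" "(\<Sum>x\<in>A \<inter> B. c x y) \<le> (\<Sum>x\<in>B. c x y)"
      "(\<Sum>x\<in>A. c x y) \<le> (\<Sum>x\<in>A \<union> B. c x y)" "(\<Sum>x\<in>B. c x y) \<le> (\<Sum>x\<in>A \<union> B. c x y)"
      using assms by (auto intro: sum_mono2)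
    moreover have "(\<Sum>x\<in>A \<union> B. c x y) + (\<Sum>x\<in>A \<inter> B. c x y) = (\<Sum>x\<in>A. c x y) + (\<Sum>x\<in>B. c x y)"
      by (rule sum.union_inter[OF assms])
    ultimately show ?thesis by (simp add: min_def)
  qed
  then show ?thesis
    unfolding cut_capacity_def sum.distrib[symmetric] by (rule sum_mono)
qed

lemma tight_sets_Un:
  assumes "finite A" "finite B"
    and "sum a (A \<union> B) \<le> cut_capacity Y c b (A \<union> B)" "sum a (A \<inter> B) \<le> cut_capacity Y c b (A \<inter> B)"
    and "sum a A = cut_capacity Y c b A" "sum a B = cut_capacity Y c b B"
  shows "sum a (A \<union> B) = cut_capacity Y c b (A \<union> B)"
  using assms cut_capacity_submodular[OF assms(1,2), of Y c b] sum.union_inter[OF assms(1,2), of a]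
  by linarith

lemma cut_capacity_decrement:
  fixes c :: "'a \<Rightarrow> 'b \<Rightarrow> nat" and b :: "'b \<Rightarrow> nat" and u :: 'a and v :: 'b
  assumes "finite Y" "v \<in> Y" "finite J"
  defines "c' \<equiv> c(u := (c u)(v := c u v - 1))" and "b' \<equiv> b(v := b v - 1)"
  shows "\<lbrakk>u \<in> J; 0 < c u v; 0 < b v\<rbrakk> \<Longrightarrow> cut_capacity Y c' b' J + 1 = cut_capacity Y c b J"
    and "u \<notin> J \<Longrightarrow> cut_capacity Y c b J \<le> cut_capacity Y c' b' J + 1"
    and "\<lbrakk>u \<notin> J; (\<Sum>x\<in>J. c x v) < b v\<rbrakk> \<Longrightarrow> cut_capacity Y c' b' J = cut_capacity Y c b J"
proof -
  have split: "cut_capacity Y c b J = min (b v) (\<Sum>x\<in>J. c x v) + (\<Sum>y\<in>Y - {v}. min (b y) (\<Sum>x\<in>J. c x y))"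
    for c b using assms(1,2) unfolding cut_capacity_def by (simp add: sum.remove)
  have "(\<Sum>x\<in>J. c' x y) = (\<Sum>x\<in>J. c x y)" if "y \<noteq> v" for y
    using that unfolding c'_def by (intro sum.cong) auto
  then have "(\<Sum>y\<in>Y - {v}. min (b' y) (\<Sum>x\<in>J. c' x y)) = (\<Sum>y\<in>Y - {v}. min (b y) (\<Sum>x\<in>J. c x y))"
    unfolding b'_def by (intro sum.cong) auto
  then have rest: "cut_capacity Y c' b' J + min (b v) (\<Sum>x\<in>J. c x v)
      = cut_capacity Y c b J + min (b' v) (\<Sum>x\<in>J. c' x v)"
    using split[of c' b'] split[of c b] by simp
  have same: "(\<Sum>x\<in>J. c' x v) = (\<Sum>x\<in>J. c x v)" if "u \<notin> J"
    using that unfolding c'_def by (intro sum.cong) auto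
  show "cut_capacity Y c' b' J + 1 = cut_capacity Y c b J" if "u \<in> J" "0 < c u v" "0 < b v"
  proof -
    have "(\<Sum>x\<in>J. c x v) = c u v + (\<Sum>x\<in>J - {u}. c x v)"
      "(\<Sum>x\<in>J. c' x v) = c' u v + (\<Sum>x\<in>J - {u}. c x v)"
      using that(1) assms(3) by (simp_all add: sum.remove c'_def)
    moreover have "c' u v + 1 = c u v" "b' v + 1 = b v"
      using that(2,3) unfolding c'_def b'_def by simp_all
    ultimately have "min (b v) (\<Sum>x\<in>J. c x v) = min (b' v) (\<Sum>x\<in>J. c' x v) + 1"
      by (simp add: min_def)
    then show ?thesis using rest by linarith
  qed
  show "cut_capacity Y c b J \<le> cut_capacity Y c' b' J + 1" if "u \<notin> J"
  proof -
    have "min (b v) (\<Sum>x\<in>J. c x v) \<le> min (b' v) (\<Sum>x\<in>J. c x v) + 1"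
      unfolding b'_def by (auto simp add: min_def)
    then show ?thesis using rest same[OF that] by linarith
  qed
  show "cut_capacity Y c' b' J = cut_capacity Y c b J" if "u \<notin> J" "(\<Sum>x\<in>J. c x v) < b v"
  proof -
    have "min (b' v) (\<Sum>x\<in>J. c x v) = min (b v) (\<Sum>x\<in>J. c x v)"
      using that(2) unfolding b'_def by (auto simp add: min_def)
    then show ?thesis using rest same[OF that(1)] by linarith
  qed
qed

lemma exists_maximum_tight_set:
  assumes "finite X" "Z \<subseteq> X"
    and hall: "\<forall>J\<subseteq>X. sum a J \<le> cut_capacity Y c b J"
  obtains U where "U \<subseteq> Z" "sum a U = cut_capacity Y c b U"
    "\<forall>J\<subseteq>Z. sum a J = cut_capacity Y c b J \<longrightarrow> J \<subseteq> U"
proof -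
  define tight where "tight J \<longleftrightarrow> J \<subseteq> Z \<and> sum a J = cut_capacity Y c b J" for J
  have "tight {}" unfolding tight_def cut_capacity_def by simp
  moreover have "card J < card X + 1" if J: "tight J" for J
  proof -
    have "J \<subseteq> X" using J \<open>Z \<subseteq> X\<close> unfolding tight_def by blast
    then show ?thesis using card_mono[OF \<open>finite X\<close>, of J] by simp
  qed
  ultimately obtain U where U: "tight U" "\<forall>J. tight J \<longrightarrow> card J \<le> card U"
    using ex_has_greatest_nat[of tight "{}" card "card X + 1"] by blast
  have U_max: "J \<subseteq> U" if J: "tight J" for J
  proof -
    have "U \<union> J \<subseteq> Z" using J U(1) unfolding tight_def by blast
    then have "U \<union> J \<subseteq> X" "U \<inter> J \<subseteq> X" using \<open>Z \<subseteq> X\<close> by auto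
    then have fin: "finite U" "finite J" using rev_finite_subset[OF \<open>finite X\<close>] by auto
    have "sum a (U \<union> J) \<le> cut_capacity Y c b (U \<union> J)"
      "sum a (U \<inter> J) \<le> cut_capacity Y c b (U \<inter> J)"
      using hall \<open>U \<union> J \<subseteq> X\<close> \<open>U \<inter> J \<subseteq> X\<close> by simp_all
    then have "sum a (U \<union> J) = cut_capacity Y c b (U \<union> J)"
      using tight_sets_Un[OF fin] J U(1) unfolding tight_def by blast
    with \<open>U \<union> J \<subseteq> Z\<close> have "card (U \<union> J) \<le> card U" using U(2) unfolding tight_def by blast
    then show ?thesis using card_seteq[of "U \<union> J" U] fin by auto
  qed
  show ?thesis
  proof (rule that)
    show "U \<subseteq> Z" "sum a U = cut_capacity Y c b U" using U(1) unfolding tight_def by blast+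
    show "\<forall>J\<subseteq>Z. sum a J = cut_capacity Y c b J \<longrightarrow> J \<subseteq> U"
      using U_max unfolding tight_def by blast
  qed
qed

lemma exists_unsaturated_neighbour:
  assumes "finite X"
    and hall: "\<forall>J\<subseteq>X. sum a J \<le> cut_capacity Y c b J"
    and "x0 \<in> X" "0 < a x0"
  obtains y0 where "y0 \<in> Y" "0 < c x0 y0" "0 < b y0"
    "\<forall>J\<subseteq>X - {x0}. sum a J = cut_capacity Y c b J \<longrightarrow> (\<Sum>x\<in>J. c x y0) < b y0"
proof -
  obtain U where U: "U \<subseteq> X - {x0}" "sum a U = cut_capacity Y c b U"
    and U_max: "\<forall>J\<subseteq>X - {x0}. sum a J = cut_capacity Y c b J \<longrightarrow> J \<subseteq> U"
    using exists_maximum_tight_set[OF \<open>finite X\<close> Diff_subset hall, of "{x0}"] by blast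
  have finU: "finite U" "x0 \<notin> U" using U(1) \<open>finite X\<close> finite_subset by blast+
  have "\<exists>y0\<in>Y. 0 < c x0 y0 \<and> 0 < b y0 \<and> (\<Sum>x\<in>U. c x y0) < b y0"
  proof (rule ccontr)
    assume "\<not> (\<exists>y0\<in>Y. 0 < c x0 y0 \<and> 0 < b y0 \<and> (\<Sum>x\<in>U. c x y0) < b y0)"
    then have "min (b y) (\<Sum>x\<in>insert x0 U. c x y) = min (b y) (\<Sum>x\<in>U. c x y)" if y: "y \<in> Y" for y
      using y finU by (cases "c x0 y = 0") (auto simp: min_def)
    then have "cut_capacity Y c b (insert x0 U) = sum a U"
      using U(2) unfolding cut_capacity_def by simp
    moreover have "insert x0 U \<subseteq> X" using U(1) \<open>x0 \<in> X\<close> by blast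
    then have "sum a (insert x0 U) \<le> cut_capacity Y c b (insert x0 U)"
      using hall by blast
    ultimately show False using finU \<open>0 < a x0\<close> by simp
  qed
  then obtain y0 where y0: "y0 \<in> Y" "0 < c x0 y0" "0 < b y0" "(\<Sum>x\<in>U. c x y0) < b y0"
    by blast
  have "\<forall>J\<subseteq>X - {x0}. sum a J = cut_capacity Y c b J \<longrightarrow> (\<Sum>x\<in>J. c x y0) < b y0"
  proof (intro allI impI)
    fix J assume "J \<subseteq> X - {x0}" "sum a J = cut_capacity Y c b J"
    then have "J \<subseteq> U" using U_max by blast
    then show "(\<Sum>x\<in>J. c x y0) < b y0"
      using sum_mono2[OF finU(1), of J "\<lambda>x. c x y0"] y0(4) by simp
  qed
  then show ?thesis using y0(1-3) that by blast
qed

lemma hall_condition_decrement: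
  assumes "finite X" "finite Y"
    and hall: "\<forall>J\<subseteq>X. sum a J \<le> cut_capacity Y c b J"
    and "x0 \<in> X" "0 < a x0" "y0 \<in> Y" "0 < c x0 y0" "0 < b y0"
    and unsaturated: "\<forall>J\<subseteq>X - {x0}. sum a J = cut_capacity Y c b J \<longrightarrow> (\<Sum>x\<in>J. c x y0) < b y0"
  shows "\<forall>J\<subseteq>X. sum (a(x0 := a x0 - 1)) J
    \<le> cut_capacity Y (c(x0 := (c x0)(y0 := c x0 y0 - 1))) (b(y0 := b y0 - 1)) J"
proof (intro allI impI)
  fix J assume "J \<subseteq> X"
  then have finJ: "finite J" using \<open>finite X\<close> finite_subset by blast
  note cap = cut_capacity_decrement[OF \<open>finite Y\<close> \<open>y0 \<in> Y\<close> finJ, where c=c and b=b and u=x0]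
  have "sum a J \<le> cut_capacity Y c b J" using hall \<open>J \<subseteq> X\<close> by blast
  show "sum (a(x0 := a x0 - 1)) J
    \<le> cut_capacity Y (c(x0 := (c x0)(y0 := c x0 y0 - 1))) (b(y0 := b y0 - 1)) J"
  proof (cases "x0 \<in> J")
    case True
    then have "sum (a(x0 := a x0 - 1)) J + 1 = sum a J"
      using finJ \<open>0 < a x0\<close> by (simp add: sum.remove)
    then show ?thesis
      using cap(1)[OF True \<open>0 < c x0 y0\<close> \<open>0 < b y0\<close>] \<open>sum a J \<le> _\<close> by linarith
  next
    case False
    then have "sum (a(x0 := a x0 - 1)) J = sum a J" by (intro sum.cong) auto
    moreover have "sum a J < cut_capacity Y c b J" if "\<not> (\<Sum>x\<in>J. c x y0) < b y0"
    proof -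
      have "J \<subseteq> X - {x0}" using \<open>J \<subseteq> X\<close> False by blast
      then have "sum a J \<noteq> cut_capacity Y c b J" using unsaturated that by blast
      then show ?thesis using \<open>sum a J \<le> _\<close> by linarith
    qed
    ultimately show ?thesis
      using cap(2,3)[OF False] \<open>sum a J \<le> _\<close> by (cases "(\<Sum>x\<in>J. c x y0) < b y0") auto
  qed
qed

theorem bipartite_supply_demand:
  assumes "finite X" "finite Y"
    and "\<forall>J\<subseteq>X. sum a J \<le> cut_capacity Y c b J"
  obtains h where "\<forall>x y. h x y \<le> c x y" "\<forall>x\<in>X. (\<Sum>y\<in>Y. h x y) = a x"
    "\<forall>y\<in>Y. (\<Sum>x\<in>X. h x y) \<le> b y"
proof -
  have exists: "\<exists>h. (\<forall>x y. h x y \<le> c x y) \<and> (\<forall>x\<in>X. (\<Sum>y\<in>Y. h x y) = a x)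
      \<and> (\<forall>y\<in>Y. (\<Sum>x\<in>X. h x y) \<le> b y)"
    if "sum a X = s" "\<forall>J\<subseteq>X. sum a J \<le> cut_capacity Y c b J" for s a b c
    using that
  proof (induction s arbitrary: a b c)
    case 0
    then show ?case using \<open>finite X\<close> by (intro exI[of _ "\<lambda>x y. 0"]) auto
  next
    case (Suc s)
    obtain x0 where x0: "x0 \<in> X" "0 < a x0"
      using sum_SucD[OF Suc.prems(1)] by blast
    obtain y0 where y0: "y0 \<in> Y" "0 < c x0 y0" "0 < b y0"
      "\<forall>J\<subseteq>X - {x0}. sum a J = cut_capacity Y c b J \<longrightarrow> (\<Sum>x\<in>J. c x y0) < b y0"
      using exists_unsaturated_neighbour[OF assms(1) Suc.prems(2) x0] .
    have "sum (a(x0 := a x0 - 1)) X = s"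
      using Suc.prems(1) x0 \<open>finite X\<close> by (simp add: sum.remove)
    then obtain h where h: "\<forall>x y. h x y \<le> (c(x0 := (c x0)(y0 := c x0 y0 - 1))) x y"
      "\<forall>x\<in>X. (\<Sum>y\<in>Y. h x y) = (a(x0 := a x0 - 1)) x"
      "\<forall>y\<in>Y. (\<Sum>x\<in>X. h x y) \<le> (b(y0 := b y0 - 1)) y"
      using Suc.IH hall_condition_decrement[OF assms(1,2) Suc.prems(2) x0 y0] by blast
    define h' where "h' x y = h x y + of_bool (x = x0 \<and> y = y0)" for x y
    have "h' x y \<le> c x y" for x y
      using h(1) y0(2) unfolding h'_def by (auto split: if_splits simp: le_diff_conv2)
    moreover have "(\<Sum>y\<in>Y. h' x y) = a x" if "x \<in> X" for x
      using h(2) that x0 y0(1) \<open>finite Y\<close> unfolding h'_def by (auto simp: sum.distrib)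
    moreover have "(\<Sum>x\<in>X. h' x y) \<le> b y" if "y \<in> Y" for y
      using h(3) that x0(1) y0(3) \<open>finite X\<close> unfolding h'_def
      by (cases "y = y0") (auto simp: sum.distrib)
    ultimately show ?case by (intro exI[of _ h']) blast
  qed
  show ?thesis using exists[OF refl assms(3)] that by blast
qed

lemma card_Collect_eq_sum_of_bool:
  "finite A \<Longrightarrow> card {x\<in>A. P x} = (\<Sum>x\<in>A. of_bool (P x))"
  by (simp add: Int_def)

lemma degree_subgraph_imp_hall_condition:
  fixes d :: "'b \<Rightarrow> nat"
  assumes "finite X" "finite Y"
    and sub: "\<forall>x\<in>X. \<forall>y\<in>Y. E x y \<longrightarrow> A x y"
    and rows: "\<forall>x\<in>X. card {y\<in>Y. E x y} = m" and cols: "\<forall>y\<in>Y. card {x\<in>X. E x y} = d y"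
  shows "\<forall>J\<subseteq>X. card J * m \<le> (\<Sum>y\<in>Y. min (d y) (card {x\<in>J. A x y}))"
proof (intro allI impI)
  fix J assume "J \<subseteq> X"
  then have "finite J" using \<open>finite X\<close> finite_subset by blast
  have "card J * m = (\<Sum>x\<in>J. \<Sum>y\<in>Y. of_bool (E x y))"
    using rows \<open>J \<subseteq> X\<close> \<open>finite Y\<close> by (simp add: card_Collect_eq_sum_of_bool subset_iff)
  also have "\<dots> = (\<Sum>y\<in>Y. card {x\<in>J. E x y})"
    using \<open>finite J\<close> by (simp add: card_Collect_eq_sum_of_bool sum.swap[of _ Y J])
  also have "\<dots> \<le> (\<Sum>y\<in>Y. min (d y) (card {x\<in>J. A x y}))"
  proof (rule sum_mono)
    fix y assume "y \<in> Y"
    have "card {x\<in>J. E x y} \<le> card {x\<in>X. E x y}"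
      using \<open>J \<subseteq> X\<close> \<open>finite X\<close> by (intro card_mono) auto
    moreover have "card {x\<in>J. E x y} \<le> card {x\<in>J. A x y}"
      using sub \<open>J \<subseteq> X\<close> \<open>y \<in> Y\<close> \<open>finite J\<close> by (intro card_mono) auto
    ultimately show "card {x\<in>J. E x y} \<le> min (d y) (card {x\<in>J. A x y})"
      using cols \<open>y \<in> Y\<close> by simp
  qed
  finally show "card J * m \<le> (\<Sum>y\<in>Y. min (d y) (card {x\<in>J. A x y}))" .
qed

lemma hall_condition_imp_degree_subgraph:
  fixes d :: "'b \<Rightarrow> nat"
  assumes "finite X" "finite Y" and total: "(\<Sum>y\<in>Y. d y) = card X * m"
    and hall: "\<forall>J\<subseteq>X. card J * m \<le> (\<Sum>y\<in>Y. min (d y) (card {x\<in>J. A x y}))"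
  obtains E where "\<forall>x\<in>X. \<forall>y\<in>Y. E x y \<longrightarrow> A x y" "\<forall>x\<in>X. card {y\<in>Y. E x y} = m"
    "\<forall>y\<in>Y. card {x\<in>X. E x y} = d y"
proof -
  have "\<forall>J\<subseteq>X. sum (\<lambda>_. m) J \<le> cut_capacity Y (\<lambda>x y. of_bool (A x y)) d J"
  proof (intro allI impI)
    fix J assume "J \<subseteq> X"
    then have "finite J" using \<open>finite X\<close> finite_subset by blast
    then have "cut_capacity Y (\<lambda>x y. of_bool (A x y)) d J = (\<Sum>y\<in>Y. min (d y) (card {x\<in>J. A x y}))"
      unfolding cut_capacity_def by (simp add: card_Collect_eq_sum_of_bool)
    then show "sum (\<lambda>_. m) J \<le> cut_capacity Y (\<lambda>x y. of_bool (A x y)) d J"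
      using hall \<open>J \<subseteq> X\<close> by simp
  qed
  then obtain h where h_le: "\<forall>x y. h x y \<le> of_bool (A x y)" and rows: "\<forall>x\<in>X. (\<Sum>y\<in>Y. h x y) = m"
    and cols_le: "\<forall>y\<in>Y. (\<Sum>x\<in>X. h x y) \<le> d y"
    using bipartite_supply_demand[OF \<open>finite X\<close> \<open>finite Y\<close>] by blast
  have "(\<Sum>y\<in>Y. \<Sum>x\<in>X. h x y) = (\<Sum>y\<in>Y. d y)"
    using rows total sum.swap[of h Y X] by simp
  then have cols: "(\<Sum>x\<in>X. h x y) = d y" if "y \<in> Y" for y
    by (rule sum_mono_inv) (use cols_le that \<open>finite Y\<close> in auto)
  define E where "E x y \<longleftrightarrow> 0 < h x y" for x y
  have h_eq: "h x y = of_bool (E x y)" for x y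
    using h_le[rule_format, of x y] unfolding E_def by (cases "A x y") auto
  show ?thesis
  proof (rule that)
    have "A x y" if "E x y" for x y
      using h_le[rule_format, of x y] that unfolding E_def by (cases "A x y") auto
    then show "\<forall>x\<in>X. \<forall>y\<in>Y. E x y \<longrightarrow> A x y" by blast
    show "\<forall>x\<in>X. card {y\<in>Y. E x y} = m"
      using rows \<open>finite Y\<close> by (simp add: card_Collect_eq_sum_of_bool h_eq[symmetric])
    show "\<forall>y\<in>Y. card {x\<in>X. E x y} = d y"
      using cols \<open>finite X\<close> by (simp add: card_Collect_eq_sum_of_bool h_eq[symmetric])
  qed
qed

theorem exists_degree_subgraph_iff:
  fixes d :: "'b \<Rightarrow> nat"
  assumes "finite X" "finite Y" and "(\<Sum>y\<in>Y. d y) = card X * m"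
  shows "(\<exists>E. (\<forall>x\<in>X. \<forall>y\<in>Y. E x y \<longrightarrow> A x y) \<and> (\<forall>x\<in>X. card {y\<in>Y. E x y} = m)
            \<and> (\<forall>y\<in>Y. card {x\<in>X. E x y} = d y))
    \<longleftrightarrow> (\<forall>J\<subseteq>X. card J * m \<le> (\<Sum>y\<in>Y. min (d y) (card {x\<in>J. A x y})))"
    (is "?subgraph \<longleftrightarrow> ?hall")
proof
  assume ?subgraph
  then show ?hall using degree_subgraph_imp_hall_condition[OF assms(1,2)] by blast
next
  assume ?hall
  then show ?subgraph by (rule hall_condition_imp_degree_subgraph[OF assms]) blast
qed

section \<open>Edge colouring of bipartite multigraphs\<close>

lemma regular_bipartite_perfect_matching:
  fixes c :: "'a \<Rightarrow> 'b \<Rightarrow> nat"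
  assumes "finite X" "finite Y" "0 < m"
    and rows: "\<forall>x\<in>X. (\<Sum>y\<in>Y. c x y) = m" and cols: "\<forall>y\<in>Y. (\<Sum>x\<in>X. c x y) = m"
  obtains h where "\<forall>x y. h x y \<le> c x y" "\<forall>x\<in>X. (\<Sum>y\<in>Y. h x y) = 1"
    "\<forall>y\<in>Y. (\<Sum>x\<in>X. h x y) = 1"
proof -
  have "\<forall>J\<subseteq>X. sum (\<lambda>_. 1) J \<le> cut_capacity Y c (\<lambda>_. 1) J"
  proof (intro allI impI)
    fix J assume "J \<subseteq> X"
    have "card J * m = (\<Sum>y\<in>Y. \<Sum>x\<in>J. c x y)"
      using rows \<open>J \<subseteq> X\<close> sum.swap[of c Y J] by (simp add: subset_iff)
    also have "\<dots> \<le> (\<Sum>y\<in>Y. m * min 1 (\<Sum>x\<in>J. c x y))"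
    proof (rule sum_mono)
      fix y assume "y \<in> Y"
      have "(\<Sum>x\<in>J. c x y) \<le> (\<Sum>x\<in>X. c x y)"
        using \<open>J \<subseteq> X\<close> \<open>finite X\<close> by (intro sum_mono2) auto
      then show "(\<Sum>x\<in>J. c x y) \<le> m * min 1 (\<Sum>x\<in>J. c x y)"
        using cols \<open>y \<in> Y\<close> by (cases "(\<Sum>x\<in>J. c x y) = 0") auto
    qed
    also have "\<dots> = m * cut_capacity Y c (\<lambda>_. 1) J"
      unfolding cut_capacity_def by (simp add: sum_distrib_left)
    finally show "sum (\<lambda>_. 1) J \<le> cut_capacity Y c (\<lambda>_. 1) J"
      using \<open>0 < m\<close> by (simp add: mult.commute)
  qed
  then obtain h where h: "\<forall>x y. h x y \<le> c x y" "\<forall>x\<in>X. (\<Sum>y\<in>Y. h x y) = 1"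
    "\<forall>y\<in>Y. (\<Sum>x\<in>X. h x y) \<le> 1"
    using bipartite_supply_demand[OF assms(1,2)] by blast
  have "m * card X = m * card Y"
    using rows cols sum.swap[of c Y X] by simp
  then have "(\<Sum>y\<in>Y. \<Sum>x\<in>X. h x y) = (\<Sum>y\<in>Y. 1)"
    using h(2) \<open>0 < m\<close> sum.swap[of h Y X] by simp
  then have "\<forall>y\<in>Y. (\<Sum>x\<in>X. h x y) = 1"
    using sum_mono_inv[of "\<lambda>y. \<Sum>x\<in>X. h x y" Y "\<lambda>_. 1"] h(3) \<open>finite Y\<close> by blast
  with h(1,2) that show ?thesis by blast
qed

lemma regular_bipartite_decomposition:
  fixes c :: "'a \<Rightarrow> 'b \<Rightarrow> nat" and m :: nat
  assumes "finite X" "finite Y"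
    and "\<forall>x\<in>X. (\<Sum>y\<in>Y. c x y) = m" "\<forall>y\<in>Y. (\<Sum>x\<in>X. c x y) = m"
  obtains P where "\<forall>i<m. \<forall>x\<in>X. (\<Sum>y\<in>Y. P i x y) = 1" "\<forall>i<m. \<forall>y\<in>Y. (\<Sum>x\<in>X. P i x y) = 1"
    "\<forall>x\<in>X. \<forall>y\<in>Y. (\<Sum>i<m. P i x y) = c x y"
proof -
  have "\<exists>P. (\<forall>i<m. \<forall>x\<in>X. (\<Sum>y\<in>Y. P i x y) = 1) \<and> (\<forall>i<m. \<forall>y\<in>Y. (\<Sum>x\<in>X. P i x y) = 1)
      \<and> (\<forall>x\<in>X. \<forall>y\<in>Y. (\<Sum>i<m. P i x y) = c x y)"
    using assms(3,4)
  proof (induction m arbitrary: c)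
    case 0
    then show ?case using \<open>finite Y\<close> by (intro exI[of _ "\<lambda>i x y. 0"]) auto
  next
    case (Suc m)
    obtain h where h: "\<forall>x y. h x y \<le> c x y" "\<forall>x\<in>X. (\<Sum>y\<in>Y. h x y) = 1"
      "\<forall>y\<in>Y. (\<Sum>x\<in>X. h x y) = 1"
      using regular_bipartite_perfect_matching[OF assms(1,2) _ Suc.prems] by blast
    have "(\<Sum>y\<in>Y. c x y - h x y) = m" if "x \<in> X" for x
      using Suc.prems(1) h(1,2) that sum_subtractf_nat[of Y "h x" "c x"] by simp
    moreover have "(\<Sum>x\<in>X. c x y - h x y) = m" if "y \<in> Y" for y
      using Suc.prems(2) h(1,3) that sum_subtractf_nat[of X "\<lambda>x. h x y" "\<lambda>x. c x y"] by simp
    ultimately obtain P where P: "\<forall>i<m. \<forall>x\<in>X. (\<Sum>y\<in>Y. P i x y) = 1"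
      "\<forall>i<m. \<forall>y\<in>Y. (\<Sum>x\<in>X. P i x y) = 1" "\<forall>x\<in>X. \<forall>y\<in>Y. (\<Sum>i<m. P i x y) = c x y - h x y"
      using Suc.IH[of "\<lambda>x y. c x y - h x y"] by blast
    define P' where "P' i = (if i = m then h else P i)" for i
    have "(\<Sum>i<m. P' i x y) = (\<Sum>i<m. P i x y)" for x y
      unfolding P'_def by (intro sum.cong) auto
    then have "(\<Sum>i<Suc m. P' i x y) = c x y" if "x \<in> X" "y \<in> Y" for x y
      using P(3) h(1) that by (simp add: P'_def le_add_diff_inverse2)
    then show ?case
      using P(1,2) h(2,3) by (intro exI[of _ P']) (auto simp: P'_def less_Suc_eq)
  qed
  with that show ?thesis by blast
qed

lemma bipartite_regular_extension:
  fixes H :: "'a \<Rightarrow> 'b \<Rightarrow> nat"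
  assumes "finite X" "finite Y"
    and rows: "\<forall>x\<in>X. (\<Sum>y\<in>Y. H x y) = m" and cols: "\<forall>y\<in>Y. (\<Sum>x\<in>X. H x y) \<le> m"
  obtains c :: "'a + 'b \<Rightarrow> 'b + 'a \<Rightarrow> nat"
  where "\<forall>u\<in>X <+> Y. (\<Sum>v\<in>Y <+> X. c u v) = m" "\<forall>v\<in>Y <+> X. (\<Sum>u\<in>X <+> Y. c u v) = m"
    "\<forall>x y. c (Inl x) (Inl y) = H x y" "\<forall>x x'. c (Inl x) (Inr x') = 0"
proof -
  \<comment> \<open>\<open>Inr\<close> vertices form a mirror copy of the graph; \<open>m - deg y\<close> parallel edges join \<open>y\<close> to its copy\<close>
  define c :: "'a + 'b \<Rightarrow> 'b + 'a \<Rightarrow> nat" where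
    "c u v = (case (u, v) of
        (Inl x, Inl y) \<Rightarrow> H x y
      | (Inl x, Inr x') \<Rightarrow> 0
      | (Inr y', Inl y) \<Rightarrow> (if y = y' then m - (\<Sum>x\<in>X. H x y) else 0)
      | (Inr y, Inr x) \<Rightarrow> H x y)" for u v
  have "(\<Sum>v\<in>Y <+> X. c u v) = m" if "u \<in> X <+> Y" for u
    using that rows cols \<open>finite X\<close> \<open>finite Y\<close> by (auto simp: sum.Plus c_def if_distrib sum.delta cong: if_cong)
  moreover have "(\<Sum>u\<in>X <+> Y. c u v) = m" if "v \<in> Y <+> X" for v
    using that rows cols \<open>finite X\<close> \<open>finite Y\<close> by (auto simp: sum.Plus c_def sum.delta')
  ultimately show ?thesis using that[of c] unfolding c_def by auto
qed

lemma bipartite_multigraph_edge_colouring: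
  fixes H :: "'a \<Rightarrow> 'b \<Rightarrow> nat"
  assumes "finite X" "finite Y"
    and "\<forall>x\<in>X. (\<Sum>y\<in>Y. H x y) = m" "\<forall>y\<in>Y. (\<Sum>x\<in>X. H x y) \<le> m"
  obtains Q where "\<forall>i<m. \<forall>x\<in>X. (\<Sum>y\<in>Y. Q i x y) = 1" "\<forall>i<m. \<forall>y\<in>Y. (\<Sum>x\<in>X. Q i x y) \<le> 1"
    "\<forall>x\<in>X. \<forall>y\<in>Y. (\<Sum>i<m. Q i x y) = H x y"
proof -
  obtain c :: "'a + 'b \<Rightarrow> 'b + 'a \<Rightarrow> nat" where c:
    "\<forall>u\<in>X <+> Y. (\<Sum>v\<in>Y <+> X. c u v) = m" "\<forall>v\<in>Y <+> X. (\<Sum>u\<in>X <+> Y. c u v) = m"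
    "\<forall>x y. c (Inl x) (Inl y) = H x y" "\<forall>x x'. c (Inl x) (Inr x') = 0"
    using bipartite_regular_extension[OF assms] by blast
  have fin: "finite (X <+> Y)" "finite (Y <+> X)" using assms(1,2) by auto
  obtain P where P: "\<forall>i<m. \<forall>u\<in>X <+> Y. (\<Sum>v\<in>Y <+> X. P i u v) = 1"
    "\<forall>i<m. \<forall>v\<in>Y <+> X. (\<Sum>u\<in>X <+> Y. P i u v) = 1"
    "\<forall>u\<in>X <+> Y. \<forall>v\<in>Y <+> X. (\<Sum>i<m. P i u v) = c u v"
    using regular_bipartite_decomposition[OF fin c(1,2)] by blast
  have P_le: "P i u v \<le> c u v" if "i < m" "u \<in> X <+> Y" "v \<in> Y <+> X" for i u v
    using member_le_sum[of i "{..<m}" "\<lambda>i. P i u v"] P(3) that by simp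
  define Q where "Q i x y = P i (Inl x) (Inl y)" for i x y
  have "(\<Sum>y\<in>Y. Q i x y) = 1" if "i < m" "x \<in> X" for i x
  proof -
    have "P i (Inl x) (Inr x') = 0" if "x' \<in> X" for x'
      using P_le[OF \<open>i < m\<close>, of "Inl x" "Inr x'"] c(4) that \<open>x \<in> X\<close> by auto
    then have "(\<Sum>x'\<in>X. P i (Inl x) (Inr x')) = 0" by simp
    have "1 = (\<Sum>v\<in>Y <+> X. P i (Inl x) v)" using P(1) \<open>i < m\<close> InlI[OF \<open>x \<in> X\<close>, of Y] by simp
    also have "\<dots> = (\<Sum>y\<in>Y. Q i x y)"
      using \<open>(\<Sum>x'\<in>X. P i (Inl x) (Inr x')) = 0\<close> assms(1,2) by (simp add: sum.Plus Q_def)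
    finally show ?thesis by simp
  qed
  moreover have "(\<Sum>x\<in>X. Q i x y) \<le> 1" if "i < m" "y \<in> Y" for i y
  proof -
    have "(\<Sum>x\<in>X. Q i x y) \<le> (\<Sum>u\<in>X <+> Y. P i u (Inl y))"
      using assms(1,2) by (simp add: sum.Plus Q_def)
    also have "\<dots> = 1" using P(2) \<open>i < m\<close> InlI[OF \<open>y \<in> Y\<close>, of X] by simp
    finally show ?thesis .
  qed
  moreover have "(\<Sum>i<m. Q i x y) = H x y" if "x \<in> X" "y \<in> Y" for x y
    using P(3) c(3) InlI[OF \<open>x \<in> X\<close>, of Y] InlI[OF \<open>y \<in> Y\<close>, of X] by (simp add: Q_def)
  ultimately show ?thesis using that by blast
qed

lemma sum_le_1_imp_unique:
  fixes f :: "'a \<Rightarrow> nat"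
  assumes "finite A" "sum f A \<le> 1" "a \<in> A" "b \<in> A" "0 < f a" "0 < f b"
  shows "a = b"
proof (rule ccontr)
  assume "a \<noteq> b"
  then have "sum f {a, b} \<le> sum f A" using assms by (intro sum_mono2) auto
  then show False using \<open>a \<noteq> b\<close> assms by simp
qed

lemma sum_eq_1_imp_ex1_pos:
  fixes f :: "'a \<Rightarrow> nat"
  assumes "finite A" "sum f A = 1"
  shows "\<exists>!a. a \<in> A \<and> 0 < f a"
proof -
  obtain a where "a \<in> A" "f a = 1" "\<forall>b\<in>A. a \<noteq> b \<longrightarrow> f b = 0"
    using sum_eq_1_iff[OF assms(1)] assms(2) by blast
  then show ?thesis by (intro ex1I[of _ a]) auto
qed

lemma bij_betw_colour_choice:
  fixes R :: "nat \<Rightarrow> 'b \<Rightarrow> nat"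
  assumes sums: "\<forall>y\<in>Y. (\<Sum>i<m. R i y) = of_bool (P y)"
    and t: "\<forall>i<m. t i \<in> Y \<and> 0 < R i (t i)"
    and t_unique: "\<forall>i<m. \<forall>y\<in>Y. 0 < R i y \<longrightarrow> t i = y"
  shows "bij_betw t {..<m} {y\<in>Y. P y}"
proof (rule bij_betw_imageI)
  show "inj_on t {..<m}"
  proof (rule inj_onI)
    fix i j assume "i \<in> {..<m}" "j \<in> {..<m}" "t i = t j"
    then have "0 < R i (t j)" "0 < R j (t j)" "t j \<in> Y" using t by (metis lessThan_iff)+
    moreover have "(\<Sum>i<m. R i (t j)) \<le> 1" using sums \<open>t j \<in> Y\<close> by simp
    ultimately show "i = j"
      using sum_le_1_imp_unique[of "{..<m}"] \<open>i \<in> {..<m}\<close> \<open>j \<in> {..<m}\<close> by blast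
  qed
  show "t ` {..<m} = {y\<in>Y. P y}"
  proof (intro equalityI subsetI)
    fix y assume "y \<in> t ` {..<m}"
    then obtain i where "i < m" "y = t i" by blast
    then have "y \<in> Y" "0 < R i y" using t by blast+
    moreover have "R i y \<le> (\<Sum>i<m. R i y)"
      using member_le_sum[of i "{..<m}" "\<lambda>i. R i y"] \<open>i < m\<close> by simp
    ultimately show "y \<in> {y\<in>Y. P y}" using sums by (cases "P y") auto
  next
    fix y assume "y \<in> {y\<in>Y. P y}"
    then have "(\<Sum>i<m. R i y) = 1" "y \<in> Y" using sums by auto
    then obtain i where "i < m" "0 < R i y" using sum_SucD[of "\<lambda>i. R i y" "{..<m}" 0] by auto
    then show "y \<in> t ` {..<m}" using t_unique \<open>y \<in> Y\<close> by force
  qed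
qed

theorem bipartite_edge_colouring:
  assumes "finite X" "finite Y"
    and "\<forall>x\<in>X. card {y\<in>Y. E x y} = m" "\<forall>y\<in>Y. card {x\<in>X. E x y} \<le> m"
  obtains T where "\<forall>i<m. inj_on (T i) X" "\<forall>x\<in>X. bij_betw (\<lambda>i. T i x) {..<m} {y\<in>Y. E x y}"
proof -
  define H :: "'a \<Rightarrow> 'b \<Rightarrow> nat" where "H x y = of_bool (E x y)" for x y
  have "\<forall>x\<in>X. (\<Sum>y\<in>Y. H x y) = m" "\<forall>y\<in>Y. (\<Sum>x\<in>X. H x y) \<le> m"
    using assms by (simp_all add: H_def Int_def)
  then obtain Q where Q: "\<forall>i<m. \<forall>x\<in>X. (\<Sum>y\<in>Y. Q i x y) = 1"
    "\<forall>i<m. \<forall>y\<in>Y. (\<Sum>x\<in>X. Q i x y) \<le> 1" "\<forall>x\<in>X. \<forall>y\<in>Y. (\<Sum>i<m. Q i x y) = H x y"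
    using bipartite_multigraph_edge_colouring[OF assms(1,2)] by blast
  define T where "T i x = (THE y. y \<in> Y \<and> 0 < Q i x y)" for i x
  have T: "T i x \<in> Y \<and> 0 < Q i x (T i x)" and T_unique: "\<And>y. y \<in> Y \<Longrightarrow> 0 < Q i x y \<Longrightarrow> T i x = y"
    if "i < m" "x \<in> X" for i x
  proof -
    have ex1: "\<exists>!y. y \<in> Y \<and> 0 < Q i x y"
      using sum_eq_1_imp_ex1_pos[OF assms(2)] Q(1) that by blast
    show "T i x \<in> Y \<and> 0 < Q i x (T i x)"
      unfolding T_def using theI'[OF ex1] .
    show "\<And>y. y \<in> Y \<Longrightarrow> 0 < Q i x y \<Longrightarrow> T i x = y"
      unfolding T_def using the1_equality[OF ex1] by blast
  qed
  have "inj_on (T i) X" if "i < m" for i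
  proof (rule inj_onI)
    fix x x' assume "x \<in> X" "x' \<in> X" "T i x = T i x'"
    then have "0 < Q i x (T i x')" "0 < Q i x' (T i x')" "T i x' \<in> Y"
      using T[OF that] by metis+
    moreover have "(\<Sum>x\<in>X. Q i x (T i x')) \<le> 1" using Q(2) \<open>i < m\<close> \<open>T i x' \<in> Y\<close> by blast
    ultimately show "x = x'" using sum_le_1_imp_unique[OF assms(1)] \<open>x \<in> X\<close> \<open>x' \<in> X\<close> by blast
  qed
  moreover have "bij_betw (\<lambda>i. T i x) {..<m} {y\<in>Y. E x y}" if "x \<in> X" for x
  proof (rule bij_betw_colour_choice)
    show "\<forall>y\<in>Y. (\<Sum>i<m. Q i x y) = of_bool (E x y)" using Q(3) that by (simp add: H_def)
  qed (use T T_unique that in auto)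
  ultimately show ?thesis using that by blast
qed

section \<open>Equivalent forms of a Hall-type condition\<close>

lemma le_sum_min_iff:
  fixes d mu :: "'a \<Rightarrow> nat"
  assumes "finite Y"
  shows "c \<le> (\<Sum>y\<in>Y. min (d y) (mu y)) \<longleftrightarrow> (\<forall>K\<subseteq>Y. c \<le> (\<Sum>y\<in>K. d y) + (\<Sum>y\<in>Y - K. mu y))"
proof
  assume c: "c \<le> (\<Sum>y\<in>Y. min (d y) (mu y))"
  show "\<forall>K\<subseteq>Y. c \<le> (\<Sum>y\<in>K. d y) + (\<Sum>y\<in>Y - K. mu y)"
  proof (intro allI impI)
    fix K assume "K \<subseteq> Y"
    have "(\<Sum>y\<in>Y. min (d y) (mu y)) = (\<Sum>y\<in>Y - K. min (d y) (mu y)) + (\<Sum>y\<in>K. min (d y) (mu y))"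
      by (rule sum.subset_diff[OF \<open>K \<subseteq> Y\<close> \<open>finite Y\<close>])
    also have "\<dots> \<le> (\<Sum>y\<in>Y - K. mu y) + (\<Sum>y\<in>K. d y)"
      by (intro add_mono sum_mono) auto
    finally show "c \<le> (\<Sum>y\<in>K. d y) + (\<Sum>y\<in>Y - K. mu y)" using c by linarith
  qed
next
  assume "\<forall>K\<subseteq>Y. c \<le> (\<Sum>y\<in>K. d y) + (\<Sum>y\<in>Y - K. mu y)"
  moreover have K: "{y\<in>Y. d y \<le> mu y} \<subseteq> Y" by blast
  ultimately have "c \<le> (\<Sum>y\<in>{y\<in>Y. d y \<le> mu y}. d y) + (\<Sum>y\<in>Y - {y\<in>Y. d y \<le> mu y}. mu y)"
    by blast
  also have "\<dots> = (\<Sum>y\<in>{y\<in>Y. d y \<le> mu y}. min (d y) (mu y)) + (\<Sum>y\<in>Y - {y\<in>Y. d y \<le> mu y}. min (d y) (mu y))"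
    by (intro arg_cong2[where f = "(+)"] sum.cong) auto
  also have "\<dots> = (\<Sum>y\<in>Y. min (d y) (mu y))"
    using sum.subset_diff[OF K \<open>finite Y\<close>, of "\<lambda>y. min (d y) (mu y)"] by linarith
  finally show "c \<le> (\<Sum>y\<in>Y. min (d y) (mu y))" .
qed

lemma all_subsets_Diff_iff: "(\<forall>J\<subseteq>N. P J) \<longleftrightarrow> (\<forall>J\<subseteq>N. P (N - J))"
proof
  assume "\<forall>J\<subseteq>N. P (N - J)"
  moreover have "N - (N - J) = J" if "J \<subseteq> N" for J using that by blast
  ultimately show "\<forall>J\<subseteq>N. P J" by (metis Diff_subset)
qed blast

lemma sum_diff_add_sum_min:
  fixes a b :: "'a \<Rightarrow> nat"
  shows "(\<Sum>y\<in>Y. a y - b y) + (\<Sum>y\<in>Y. min (a y) (b y)) = (\<Sum>y\<in>Y. a y)"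
  unfolding sum.distrib[symmetric] by (rule sum.cong) auto

lemma card_Diff_mult:
  assumes "finite N" "J \<subseteq> N"
  shows "card (N - J) * m + card J * m = card N * m"
  using assms by (metis add_mult_distrib card_Diff_subset card_mono finite_subset le_add_diff_inverse2)

lemma left_hall_iff_compl_form:
  fixes d :: "'b \<Rightarrow> nat" and mu :: "'a set \<Rightarrow> 'b \<Rightarrow> nat"
  assumes "finite N" and total: "(\<Sum>y\<in>Y. d y) = card N * m"
  shows "(\<forall>J\<subseteq>N. card J * m \<le> (\<Sum>y\<in>Y. min (d y) (mu J y)))
    \<longleftrightarrow> (\<forall>J\<subseteq>N. (\<Sum>y\<in>Y. d y - mu (N - J) y) \<le> card J * m)"
proof -
  have "card (N - J) * m \<le> (\<Sum>y\<in>Y. min (d y) (mu (N - J) y))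
      \<longleftrightarrow> (\<Sum>y\<in>Y. d y - mu (N - J) y) \<le> card J * m" if "J \<subseteq> N" for J
    using card_Diff_mult[OF \<open>finite N\<close> that, of m] sum_diff_add_sum_min[of d "mu (N - J)" Y] total
    by (intro iffI; linarith)
  then show ?thesis
    using all_subsets_Diff_iff[of N "\<lambda>J. card J * m \<le> (\<Sum>y\<in>Y. min (d y) (mu J y))"] by blast
qed

lemma right_hall_iff_compl_form:
  fixes d :: "'b \<Rightarrow> nat" and nu :: "'b set \<Rightarrow> 'a \<Rightarrow> nat"
  assumes "finite Y" and total: "(\<Sum>y\<in>Y. d y) = card N * m"
  shows "(\<forall>K\<subseteq>Y. (\<Sum>y\<in>K. d y) \<le> (\<Sum>x\<in>N. min m (nu K x)))
    \<longleftrightarrow> (\<forall>K\<subseteq>Y. (\<Sum>x\<in>N. m - nu (Y - K) x) \<le> (\<Sum>y\<in>K. d y))"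
proof -
  have "(\<Sum>y\<in>Y - K. d y) \<le> (\<Sum>x\<in>N. min m (nu (Y - K) x))
      \<longleftrightarrow> (\<Sum>x\<in>N. m - nu (Y - K) x) \<le> (\<Sum>y\<in>K. d y)" if "K \<subseteq> Y" for K
  proof -
    have "(\<Sum>x\<in>N. m - nu (Y - K) x) + (\<Sum>x\<in>N. min m (nu (Y - K) x)) = card N * m"
      using sum_diff_add_sum_min[of "\<lambda>_. m" "nu (Y - K)" N] by simp
    then show ?thesis
      using sum.subset_diff[OF that \<open>finite Y\<close>, of d] total by (intro iffI; linarith)
  qed
  then show ?thesis
    using all_subsets_Diff_iff[of Y "\<lambda>K. (\<Sum>y\<in>K. d y) \<le> (\<Sum>x\<in>N. min m (nu K x))"] by blast
qed

lemma left_hall_iff_split_form: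
  fixes d :: "'b \<Rightarrow> nat" and mu :: "'a set \<Rightarrow> 'b \<Rightarrow> nat"
  assumes "finite Y"
  shows "(\<forall>J\<subseteq>N. card J * m \<le> (\<Sum>y\<in>Y. min (d y) (mu J y)))
    \<longleftrightarrow> (\<forall>J\<subseteq>N. \<forall>K\<subseteq>Y. card J * m \<le> (\<Sum>y\<in>K. d y) + (\<Sum>y\<in>Y - K. mu J y))"
proof -
  have "card J * m \<le> (\<Sum>y\<in>Y. min (d y) (mu J y))
      \<longleftrightarrow> (\<forall>K\<subseteq>Y. card J * m \<le> (\<Sum>y\<in>K. d y) + (\<Sum>y\<in>Y - K. mu J y))" for J
    by (rule le_sum_min_iff[OF assms])
  then show ?thesis by simp
qed

lemma right_hall_iff_split_form:
  fixes d :: "'b \<Rightarrow> nat" and nu :: "'b set \<Rightarrow> 'a \<Rightarrow> nat"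
  assumes "finite N"
  shows "(\<forall>K\<subseteq>Y. (\<Sum>y\<in>K. d y) \<le> (\<Sum>x\<in>N. min m (nu K x)))
    \<longleftrightarrow> (\<forall>J\<subseteq>N. \<forall>K\<subseteq>Y. (\<Sum>y\<in>K. d y) \<le> card J * m + (\<Sum>x\<in>N - J. nu K x))"
proof -
  have "(\<Sum>y\<in>K. d y) \<le> (\<Sum>x\<in>N. min m (nu K x))
      \<longleftrightarrow> (\<forall>J\<subseteq>N. (\<Sum>y\<in>K. d y) \<le> (\<Sum>x\<in>J. m) + (\<Sum>x\<in>N - J. nu K x))" for K
    by (rule le_sum_min_iff[OF assms])
  then have "(\<forall>K\<subseteq>Y. (\<Sum>y\<in>K. d y) \<le> (\<Sum>x\<in>N. min m (nu K x)))
      \<longleftrightarrow> (\<forall>K\<subseteq>Y. \<forall>J\<subseteq>N. (\<Sum>y\<in>K. d y) \<le> card J * m + (\<Sum>x\<in>N - J. nu K x))"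
    by simp
  then show ?thesis by blast
qed

lemma split_forms_iff:
  fixes d :: "'b \<Rightarrow> nat" and mu :: "'a set \<Rightarrow> 'b \<Rightarrow> nat" and nu :: "'b set \<Rightarrow> 'a \<Rightarrow> nat"
  assumes "finite N" "finite Y" and total: "(\<Sum>y\<in>Y. d y) = card N * m"
    and swap: "\<forall>J\<subseteq>N. \<forall>K\<subseteq>Y. (\<Sum>y\<in>K. mu J y) = (\<Sum>x\<in>J. nu K x)"
  shows "(\<forall>J\<subseteq>N. \<forall>K\<subseteq>Y. card J * m \<le> (\<Sum>y\<in>K. d y) + (\<Sum>y\<in>Y - K. mu J y))
    \<longleftrightarrow> (\<forall>J\<subseteq>N. \<forall>K\<subseteq>Y. (\<Sum>y\<in>K. d y) \<le> card J * m + (\<Sum>x\<in>N - J. nu K x))"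
proof -
  define Q where "Q J K \<longleftrightarrow> card J * m \<le> (\<Sum>y\<in>K. d y) + (\<Sum>y\<in>Y - K. mu J y)" for J K
  have compl: "Q (N - J) (Y - K) \<longleftrightarrow> (\<Sum>y\<in>K. d y) \<le> card J * m + (\<Sum>x\<in>N - J. nu K x)"
    if "J \<subseteq> N" "K \<subseteq> Y" for J K
  proof -
    have "Y - (Y - K) = K" using that(2) by blast
    then have "(\<Sum>y\<in>Y - (Y - K). mu (N - J) y) = (\<Sum>x\<in>N - J. nu K x)"
      using swap that(2) by simp
    then show ?thesis
      using card_Diff_mult[OF \<open>finite N\<close> that(1), of m] sum.subset_diff[OF that(2) \<open>finite Y\<close>, of d]
        total unfolding Q_def by (intro iffI; linarith)
  qed
  have "(\<forall>J\<subseteq>N. \<forall>K\<subseteq>Y. Q J K) \<longleftrightarrow> (\<forall>J\<subseteq>N. \<forall>K\<subseteq>Y. Q (N - J) K)"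
    by (rule all_subsets_Diff_iff)
  also have "\<dots> \<longleftrightarrow> (\<forall>J\<subseteq>N. \<forall>K\<subseteq>Y. Q (N - J) (Y - K))"
    by (subst all_subsets_Diff_iff[of Y]) (rule refl)
  also have "\<dots> \<longleftrightarrow> (\<forall>J\<subseteq>N. \<forall>K\<subseteq>Y. (\<Sum>y\<in>K. d y) \<le> card J * m + (\<Sum>x\<in>N - J. nu K x))"
    using compl by auto
  finally show ?thesis unfolding Q_def .
qed

section \<open>Completing latin rectangles\<close>

lemma occ_split:
  assumes "r \<le> n"
  shows "occ n n S l = occ r n S l + card {(i, j). i \<in> {r<..n} \<and> j \<in> {1..n} \<and> S i j = l}"
proof -
  have eq: "{(i, j). i \<in> {1..n} \<and> j \<in> {1..n} \<and> S i j = l}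
    = {(i, j). i \<in> {1..r} \<and> j \<in> {1..n} \<and> S i j = l} \<union> {(i, j). i \<in> {r<..n} \<and> j \<in> {1..n} \<and> S i j = l}"
    using assms by auto
  have fin: "finite {(i, j). i \<in> A \<and> j \<in> {1..n} \<and> S i j = l}" if "finite A" for A :: "nat set"
  proof (rule finite_subset)
    show "{(i, j). i \<in> A \<and> j \<in> {1..n} \<and> S i j = l} \<subseteq> A \<times> {1..n}" by auto
  qed (use that in simp)
  show ?thesis unfolding occ_def eq
    by (rule card_Un_disjoint[OF fin fin]) auto
qed

lemma occ_cong:
  assumes "\<forall>i\<in>{1..r}. \<forall>j\<in>{1..s}. S i j = L i j"
  shows "occ r s S l = occ r s L l"
  unfolding occ_def using assms by (intro arg_cong[where f = card]) auto

lemma sum_occ: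
  assumes "\<forall>i\<in>{1..r}. \<forall>j\<in>{1..s}. L i j \<in> {1..k}"
  shows "(\<Sum>l\<in>{1..k}. occ r s L l) = r * s"
proof -
  have "{1..r} \<times> {1..s} = (\<Union>l\<in>{1..k}. {(i, j). i \<in> {1..r} \<and> j \<in> {1..s} \<and> L i j = l})"
    using assms by auto
  moreover have "card (\<Union>l\<in>{1..k}. {(i, j). i \<in> {1..r} \<and> j \<in> {1..s} \<and> L i j = l}) = (\<Sum>l\<in>{1..k}. occ r s L l)"
    unfolding occ_def
    by (rule card_UN_disjoint) (auto intro: finite_subset[of _ "{1..r} \<times> {1..s}"])
  moreover have "card ({1..r} \<times> {1..s}) = r * s" by simp
  ultimately show ?thesis by metis
qed

lemma card_new_cells_eq_card_columns:
  fixes S :: "nat \<Rightarrow> nat \<Rightarrow> nat"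
  assumes "\<forall>j\<in>{1..n}. \<forall>i\<in>{1..n}. \<forall>i'\<in>{1..n}. i \<noteq> i' \<longrightarrow> S i j \<noteq> S i' j"
  shows "card {(i, j). i \<in> {r<..n} \<and> j \<in> {1..n} \<and> S i j = l}
    = card {j\<in>{1..n}. \<exists>i\<in>{r<..n}. S i j = l}"
proof -
  have col_inj: "i = i'" if "i \<in> {r<..n}" "i' \<in> {r<..n}" "j \<in> {1..n}" "S i j = S i' j" for i i' j
  proof (rule ccontr)
    assume "i \<noteq> i'"
    moreover have "i \<in> {1..n}" "i' \<in> {1..n}" using that(1,2) by auto
    ultimately show False using assms that(3,4) by blast
  qed
  have inj: "inj_on snd {(i, j). i \<in> {r<..n} \<and> j \<in> {1..n} \<and> S i j = l}"
  proof (rule inj_onI)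
    fix p q assume "p \<in> {(i, j). i \<in> {r<..n} \<and> j \<in> {1..n} \<and> S i j = l}"
      "q \<in> {(i, j). i \<in> {r<..n} \<and> j \<in> {1..n} \<and> S i j = l}" "snd p = snd q"
    then show "p = q" by (cases p; cases q) (auto intro: col_inj)
  qed
  have "snd ` {(i, j). i \<in> {r<..n} \<and> j \<in> {1..n} \<and> S i j = l}
    = {j\<in>{1..n}. \<exists>i\<in>{r<..n}. S i j = l}"
    by (auto simp: image_iff)
  with card_image[OF inj] show ?thesis by simp
qed

lemma card_new_cells_le:
  fixes S :: "nat \<Rightarrow> nat \<Rightarrow> nat"
  assumes "\<forall>i\<in>{1..n}. \<forall>j\<in>{1..n}. \<forall>j'\<in>{1..n}. j \<noteq> j' \<longrightarrow> S i j \<noteq> S i j'"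
  shows "card {(i, j). i \<in> {r<..n} \<and> j \<in> {1..n} \<and> S i j = l} \<le> n - r"
proof -
  have row_inj: "j = j'" if "i \<in> {r<..n}" "j \<in> {1..n}" "j' \<in> {1..n}" "S i j = S i j'" for i j j'
  proof (rule ccontr)
    assume "j \<noteq> j'"
    moreover have "i \<in> {1..n}" using that(1) by auto
    ultimately show False using assms that(2-4) by blast
  qed
  have "inj_on fst {(i, j). i \<in> {r<..n} \<and> j \<in> {1..n} \<and> S i j = l}"
  proof (rule inj_onI)
    fix p q assume "p \<in> {(i, j). i \<in> {r<..n} \<and> j \<in> {1..n} \<and> S i j = l}"
      "q \<in> {(i, j). i \<in> {r<..n} \<and> j \<in> {1..n} \<and> S i j = l}" "fst p = fst q"
    then show "p = q" by (cases p; cases q) (auto intro: row_inj)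
  qed
  moreover have "fst ` {(i, j). i \<in> {r<..n} \<and> j \<in> {1..n} \<and> S i j = l} \<subseteq> {r<..n}" by auto
  ultimately show ?thesis using card_inj_on_le[of fst _ "{r<..n}"] by simp
qed

lemma latin_square_new_symbols:
  assumes sq: "rho_latin_square n k rho S" and agree: "\<forall>i\<in>{1..r}. \<forall>j\<in>{1..n}. S i j = L i j"
    and "r \<le> n"
  shows "\<forall>l\<in>{1..k}. rho l - occ r n L l \<le> n - r"
    and "\<forall>j\<in>{1..n}. \<forall>l\<in>{1..k}. (\<exists>i\<in>{r<..n}. S i j = l) \<longrightarrow> (\<forall>i\<in>{1..r}. L i j \<noteq> l)"
    and "\<forall>j\<in>{1..n}. card {l\<in>{1..k}. \<exists>i\<in>{r<..n}. S i j = l} = n - r"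
    and "\<forall>l\<in>{1..k}. card {j\<in>{1..n}. \<exists>i\<in>{r<..n}. S i j = l} = rho l - occ r n L l"
proof -
  have S1: "\<forall>i\<in>{1..n}. \<forall>j\<in>{1..n}. S i j \<in> {1..k}"
    and S2: "\<forall>i\<in>{1..n}. \<forall>j\<in>{1..n}. \<forall>j'\<in>{1..n}. j \<noteq> j' \<longrightarrow> S i j \<noteq> S i j'"
    and S3: "\<forall>j\<in>{1..n}. \<forall>i\<in>{1..n}. \<forall>i'\<in>{1..n}. i \<noteq> i' \<longrightarrow> S i j \<noteq> S i' j"
    and S4: "\<forall>l\<in>{1..k}. occ n n S l = rho l"
    using sq unfolding rho_latin_square_def by blast+
  have new_cells: "card {(i, j). i \<in> {r<..n} \<and> j \<in> {1..n} \<and> S i j = l} = rho l - occ r n L l"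
    if "l \<in> {1..k}" for l
    using occ_split[OF \<open>r \<le> n\<close>, of S l] occ_cong[OF agree, of l] S4 that by simp
  show "\<forall>l\<in>{1..k}. rho l - occ r n L l \<le> n - r"
    using new_cells card_new_cells_le[OF S2, of r] by (metis (no_types))
  show "\<forall>l\<in>{1..k}. card {j\<in>{1..n}. \<exists>i\<in>{r<..n}. S i j = l} = rho l - occ r n L l"
    using new_cells card_new_cells_eq_card_columns[OF S3, of r] by simp
  show "\<forall>j\<in>{1..n}. \<forall>l\<in>{1..k}. (\<exists>i\<in>{r<..n}. S i j = l) \<longrightarrow> (\<forall>i\<in>{1..r}. L i j \<noteq> l)"
  proof (intro ballI impI)
    fix j l i' assume "j \<in> {1..n}" "\<exists>i\<in>{r<..n}. S i j = l" "i' \<in> {1..r}"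
    then obtain i where "i \<in> {r<..n}" "S i j = l" by blast
    moreover have "i' \<in> {1..n}" "i' \<noteq> i" using \<open>i' \<in> {1..r}\<close> \<open>r \<le> n\<close> \<open>i \<in> {r<..n}\<close> by auto
    moreover have "i \<in> {1..n}" using \<open>i \<in> {r<..n}\<close> by auto
    ultimately have "S i' j \<noteq> S i j" using S3 \<open>j \<in> {1..n}\<close> by blast
    then show "L i' j \<noteq> l" using agree \<open>j \<in> {1..n}\<close> \<open>i' \<in> {1..r}\<close> \<open>S i j = l\<close> by simp
  qed
  show "\<forall>j\<in>{1..n}. card {l\<in>{1..k}. \<exists>i\<in>{r<..n}. S i j = l} = n - r"
  proof
    fix j assume "j \<in> {1..n}"
    then have "{l\<in>{1..k}. \<exists>i\<in>{r<..n}. S i j = l} = (\<lambda>i. S i j) ` {r<..n}"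
      using S1 by auto
    moreover have "inj_on (\<lambda>i. S i j) {r<..n}"
    proof (rule inj_onI)
      fix i i' assume "i \<in> {r<..n}" "i' \<in> {r<..n}" "S i j = S i' j"
      moreover have "i \<in> {1..n}" "i' \<in> {1..n}" using \<open>i \<in> {r<..n}\<close> \<open>i' \<in> {r<..n}\<close> by auto
      ultimately show "i = i'" using S3 \<open>j \<in> {1..n}\<close> by blast
    qed
    ultimately show "card {l\<in>{1..k}. \<exists>i\<in>{r<..n}. S i j = l} = n - r"
      by (simp add: card_image)
  qed
qed

definition stack_rows :: "nat \<Rightarrow> (nat \<Rightarrow> nat \<Rightarrow> nat) \<Rightarrow> (nat \<Rightarrow> nat \<Rightarrow> nat) \<Rightarrow> nat \<Rightarrow> nat \<Rightarrow> nat" where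
  "stack_rows r L T i j = (if i \<le> r then L i j else T (i - r - 1) j)"

lemma stack_rows_image_new_rows:
  assumes "r \<le> n"
  shows "(\<lambda>i. stack_rows r L T i j) ` {r<..n} = (\<lambda>c. T c j) ` {..<n - r}"
proof -
  have "{r<..n} = (\<lambda>c. c + r + 1) ` {..<n - r}"
  proof (intro equalityI subsetI)
    fix i assume "i \<in> {r<..n}"
    then show "i \<in> (\<lambda>c. c + r + 1) ` {..<n - r}"
      by (intro image_eqI[of _ _ "i - r - 1"]) auto
  qed (use assms in auto)
  then have "(\<lambda>i. stack_rows r L T i j) ` {r<..n} = (\<lambda>c. stack_rows r L T (c + r + 1) j) ` {..<n - r}"
    by (simp only: image_image)
  also have "\<dots> = (\<lambda>c. T c j) ` {..<n - r}" by (simp add: stack_rows_def)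
  finally show ?thesis .
qed

lemma stack_rows_distinct_in_rows:
  assumes "\<forall>i\<in>{1..r}. \<forall>j\<in>{1..n}. \<forall>j'\<in>{1..n}. j \<noteq> j' \<longrightarrow> L i j \<noteq> L i j'"
    and "\<forall>c<n - r. inj_on (T c) {1..n}"
  shows "\<forall>i\<in>{1..n}. \<forall>j\<in>{1..n}. \<forall>j'\<in>{1..n}. j \<noteq> j' \<longrightarrow> stack_rows r L T i j \<noteq> stack_rows r L T i j'"
proof (intro ballI impI)
  fix i j j' assume "i \<in> {1..n}" "j \<in> {1..n}" "j' \<in> {1..n}" "j \<noteq> j'"
  show "stack_rows r L T i j \<noteq> stack_rows r L T i j'"
  proof (cases "i \<le> r")
    case True
    then show ?thesis using assms(1) \<open>i \<in> {1..n}\<close> \<open>j \<in> {1..n}\<close> \<open>j' \<in> {1..n}\<close> \<open>j \<noteq> j'\<close>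
      by (simp add: stack_rows_def)
  next
    case False
    then have "i - r - 1 < n - r" using \<open>i \<in> {1..n}\<close> by auto
    then have "inj_on (T (i - r - 1)) {1..n}" using assms(2) by blast
    then show ?thesis using False \<open>j \<in> {1..n}\<close> \<open>j' \<in> {1..n}\<close> \<open>j \<noteq> j'\<close>
      by (simp add: stack_rows_def inj_on_eq_iff)
  qed
qed

lemma stack_rows_distinct_in_columns:
  assumes "\<forall>j\<in>{1..n}. \<forall>i\<in>{1..r}. \<forall>i'\<in>{1..r}. i \<noteq> i' \<longrightarrow> L i j \<noteq> L i' j"
    and T_inj: "\<forall>j\<in>{1..n}. inj_on (\<lambda>c. T c j) {..<n - r}"
    and T_new: "\<forall>c<n - r. \<forall>j\<in>{1..n}. \<forall>i\<in>{1..r}. T c j \<noteq> L i j"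
  shows "\<forall>j\<in>{1..n}. \<forall>i\<in>{1..n}. \<forall>i'\<in>{1..n}. i \<noteq> i' \<longrightarrow> stack_rows r L T i j \<noteq> stack_rows r L T i' j"
proof (intro ballI impI)
  fix j i i' assume ij: "j \<in> {1..n}" "i \<in> {1..n}" "i' \<in> {1..n}" "i \<noteq> i'"
  have old_new: "stack_rows r L T i j \<noteq> stack_rows r L T i' j"
    if "i \<in> {1..r}" "i' \<in> {1..n}" "\<not> i' \<le> r" for i i'
  proof -
    have "i' - r - 1 < n - r" using that(2,3) by auto
    then have "T (i' - r - 1) j \<noteq> L i j" using T_new ij(1) that(1) by blast
    then show ?thesis using that(1,3) by (simp add: stack_rows_def)
  qed
  consider "i \<le> r" "i' \<le> r" | "i \<le> r" "\<not> i' \<le> r" | "\<not> i \<le> r" "i' \<le> r" | "\<not> i \<le> r" "\<not> i' \<le> r"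
    by blast
  then show "stack_rows r L T i j \<noteq> stack_rows r L T i' j"
  proof cases
    case 1
    then show ?thesis using assms(1) ij by (simp add: stack_rows_def)
  next
    case 2
    then show ?thesis using old_new[of i i'] ij by simp
  next
    case 3
    then show ?thesis using old_new[of i' i] ij by auto
  next
    case 4
    then have "i - r - 1 \<noteq> i' - r - 1" "i - r - 1 \<in> {..<n - r}" "i' - r - 1 \<in> {..<n - r}"
      using ij(2-4) by auto
    moreover have "inj_on (\<lambda>c. T c j) {..<n - r}" using T_inj ij(1) by blast
    ultimately have "T (i - r - 1) j \<noteq> T (i' - r - 1) j" using inj_onD by fastforce
    then show ?thesis using 4 by (simp add: stack_rows_def)
  qed
qed

lemma new_symbols_imp_completable:
  assumes rect: "rho_latin_rectangle n k rho r n L" and "r \<le> n"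
    and demand: "\<forall>l\<in>{1..k}. rho l - occ r n L l \<le> n - r"
    and missing: "\<forall>j\<in>{1..n}. \<forall>l\<in>{1..k}. E j l \<longrightarrow> (\<forall>i\<in>{1..r}. L i j \<noteq> l)"
    and column_degree: "\<forall>j\<in>{1..n}. card {l\<in>{1..k}. E j l} = n - r"
    and symbol_degree: "\<forall>l\<in>{1..k}. card {j\<in>{1..n}. E j l} = rho l - occ r n L l"
  shows "completable n k rho r n L"
proof -
  have L1: "\<forall>i\<in>{1..r}. \<forall>j\<in>{1..n}. L i j \<in> {1..k}"
    and L2: "\<forall>i\<in>{1..r}. \<forall>j\<in>{1..n}. \<forall>j'\<in>{1..n}. j \<noteq> j' \<longrightarrow> L i j \<noteq> L i j'"
    and L3: "\<forall>j\<in>{1..n}. \<forall>i\<in>{1..r}. \<forall>i'\<in>{1..r}. i \<noteq> i' \<longrightarrow> L i j \<noteq> L i' j"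
    and L4: "\<forall>l\<in>{1..k}. occ r n L l \<le> rho l"
    using rect unfolding rho_latin_rectangle_def by blast+
  obtain T where T_inj: "\<forall>c<n - r. inj_on (T c) {1..n}"
    and T_bij: "\<forall>j\<in>{1..n}. bij_betw (\<lambda>c. T c j) {..<n - r} {l\<in>{1..k}. E j l}"
    using bipartite_edge_colouring[of "{1..n}" "{1..k}" E "n - r"] column_degree symbol_degree demand
    by auto
  define S where "S = stack_rows r L T"
  have new_entries: "(\<lambda>i. S i j) ` {r<..n} = {l\<in>{1..k}. E j l}" if "j \<in> {1..n}" for j
    using stack_rows_image_new_rows[OF \<open>r \<le> n\<close>] T_bij that unfolding S_def bij_betw_def by simp
  have "T c j \<in> {l\<in>{1..k}. E j l}" if "c < n - r" "j \<in> {1..n}" for c j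
    using T_bij that bij_betwE by blast
  then have T_new: "\<forall>c<n - r. \<forall>j\<in>{1..n}. \<forall>i\<in>{1..r}. T c j \<noteq> L i j"
    using missing by fastforce
  have S1: "\<forall>i\<in>{1..n}. \<forall>j\<in>{1..n}. S i j \<in> {1..k}"
    using L1 new_entries unfolding S_def stack_rows_def by (fastforce simp: image_iff)
  have S3: "\<forall>j\<in>{1..n}. \<forall>i\<in>{1..n}. \<forall>i'\<in>{1..n}. i \<noteq> i' \<longrightarrow> S i j \<noteq> S i' j"
    using stack_rows_distinct_in_columns[OF L3 _ T_new] T_bij unfolding S_def bij_betw_def by blast
  have S4: "\<forall>l\<in>{1..k}. occ n n S l = rho l"
  proof
    fix l assume "l \<in> {1..k}"
    have "(\<exists>i\<in>{r<..n}. S i j = l) \<longleftrightarrow> E j l" if "j \<in> {1..n}" for j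
    proof -
      have "l \<in> (\<lambda>i. S i j) ` {r<..n} \<longleftrightarrow> E j l"
        using new_entries[OF that] \<open>l \<in> {1..k}\<close> by auto
      then show ?thesis by (auto simp: image_iff)
    qed
    then have "{j\<in>{1..n}. \<exists>i\<in>{r<..n}. S i j = l} = {j\<in>{1..n}. E j l}" by auto
    then have "card {(i, j). i \<in> {r<..n} \<and> j \<in> {1..n} \<and> S i j = l} = rho l - occ r n L l"
      using card_new_cells_eq_card_columns[OF S3, of r l] symbol_degree \<open>l \<in> {1..k}\<close> by simp
    moreover have "occ r n S l = occ r n L l" by (rule occ_cong) (simp add: S_def stack_rows_def)
    ultimately show "occ n n S l = rho l"
      using occ_split[OF \<open>r \<le> n\<close>, of S l] L4 \<open>l \<in> {1..k}\<close> by simp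
  qed
  have "rho_latin_square n k rho S"
    unfolding rho_latin_square_def
    using S1 stack_rows_distinct_in_rows[OF L2 T_inj] S3 S4 unfolding S_def by blast
  then show ?thesis unfolding completable_def S_def stack_rows_def by auto
qed

lemma sum_mu_sym_eq_sum_mu_col:
  assumes "finite J" "finite K"
  shows "(\<Sum>l\<in>K. mu_sym r L J l) = (\<Sum>j\<in>J. mu_col r L K j)"
proof -
  have "(\<Sum>l\<in>K. mu_sym r L J l) = (\<Sum>l\<in>K. \<Sum>j\<in>J. of_bool (\<forall>i\<in>{1..r}. L i j \<noteq> l))"
    by (simp only: mu_sym_def card_Collect_eq_sum_of_bool[OF assms(1)])
  also have "\<dots> = (\<Sum>j\<in>J. \<Sum>l\<in>K. of_bool (\<forall>i\<in>{1..r}. L i j \<noteq> l))"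
    by (rule sum.swap)
  also have "\<dots> = (\<Sum>j\<in>J. mu_col r L K j)"
    by (simp only: mu_col_def card_Collect_eq_sum_of_bool[OF assms(2)])
  finally show ?thesis .
qed

lemma sum_rho_diff_occ:
  assumes "rho_latin_rectangle n k rho r n L" "(\<Sum>l\<in>{1..k}. rho l) = n ^ 2"
  shows "(\<Sum>l\<in>{1..k}. rho l - occ r n L l) = card {1..n} * (n - r)"
proof -
  have "\<forall>i\<in>{1..r}. \<forall>j\<in>{1..n}. L i j \<in> {1..k}" "\<forall>l\<in>{1..k}. occ r n L l \<le> rho l"
    using assms(1) unfolding rho_latin_rectangle_def by blast+
  then have "(\<Sum>l\<in>{1..k}. rho l - occ r n L l) = n * n - r * n"
    using sum_subtractf_nat[of "{1..k}" "occ r n L" rho] sum_occ assms(2)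
    by (simp add: power2_eq_square)
  then show ?thesis by (simp add: diff_mult_distrib2 mult.commute)
qed

lemma completable_iff_new_symbols:
  assumes rect: "rho_latin_rectangle n k rho r n L" and "r \<le> n"
  shows "completable n k rho r n L \<longleftrightarrow> (\<forall>l\<in>{1..k}. rho l - occ r n L l \<le> n - r) \<and>
    (\<exists>E. (\<forall>j\<in>{1..n}. \<forall>l\<in>{1..k}. E j l \<longrightarrow> (\<forall>i\<in>{1..r}. L i j \<noteq> l))
      \<and> (\<forall>j\<in>{1..n}. card {l\<in>{1..k}. E j l} = n - r)
      \<and> (\<forall>l\<in>{1..k}. card {j\<in>{1..n}. E j l} = rho l - occ r n L l))"
    (is "_ \<longleftrightarrow> ?new_symbols")
proof
  assume "completable n k rho r n L"
  then obtain S where "rho_latin_square n k rho S" "\<forall>i\<in>{1..r}. \<forall>j\<in>{1..n}. S i j = L i j"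
    unfolding completable_def by blast
  note new = latin_square_new_symbols[OF this \<open>r \<le> n\<close>]
  show ?new_symbols
    by (intro conjI exI[of _ "\<lambda>j l. \<exists>i\<in>{r<..n}. S i j = l"]) (fact new)+
qed (use new_symbols_imp_completable[OF rect \<open>r \<le> n\<close>] in blast)

lemma completable_iff_hall_condition:
  assumes rect: "rho_latin_rectangle n k rho r n L" and "r \<le> n"
    and "(\<Sum>l\<in>{1..k}. rho l) = n ^ 2"
  shows "completable n k rho r n L \<longleftrightarrow> (\<forall>l\<in>{1..k}. rho l - occ r n L l \<le> n - r) \<and>
    (\<forall>J\<subseteq>{1..n}. card J * (n - r) \<le> (\<Sum>l\<in>{1..k}. min (rho l - occ r n L l) (mu_sym r L J l)))"
  using completable_iff_new_symbols[OF rect \<open>r \<le> n\<close>]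
    exists_degree_subgraph_iff[OF finite_atLeastAtMost finite_atLeastAtMost sum_rho_diff_occ[OF rect assms(3)],
      of "\<lambda>j l. \<forall>i\<in>{1..r}. L i j \<noteq> l"]
  unfolding mu_sym_def by simp

theorem theorem3p1:
  fixes n k r :: nat and rho :: "nat \<Rightarrow> nat" and L :: "nat \<Rightarrow> nat \<Rightarrow> nat"
  assumes "0 < n" and "0 < k" and "n \<le> k"
    and "\<forall>l\<in>{1..k}. 1 \<le> rho l \<and> rho l \<le> n"
    and "(\<Sum>l\<in>{1..k}. rho l) = n ^ 2"
    and "rho_latin_rectangle n k rho r n L"
    and "r < n"
  defines "e \<equiv> occ r n L"
  defines "C0 \<equiv> (\<forall>l\<in>{1..k}. rho l - e l \<le> n - r)"
  shows
   "(completable n k rho r n L \<longleftrightarrow> C0 \<and>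
      (\<forall>J\<subseteq>{1..n}. card J * (n - r)
          \<le> (\<Sum>l\<in>{1..k}. min (rho l - e l) (mu_sym r L J l)))) \<and>
    (completable n k rho r n L \<longleftrightarrow> C0 \<and>
      (\<forall>K\<subseteq>{1..k}. (\<Sum>l\<in>K. rho l - e l)
          \<le> (\<Sum>j\<in>{1..n}. min (n - r) (mu_col r L K j)))) \<and>
    (completable n k rho r n L \<longleftrightarrow> C0 \<and>
      (\<forall>J\<subseteq>{1..n}. card J * (n - r)
          \<ge> (\<Sum>l\<in>{1..k}. (rho l - e l) - mu_sym r L ({1..n} - J) l))) \<and>
    (completable n k rho r n L \<longleftrightarrow> C0 \<and>
      (\<forall>K\<subseteq>{1..k}. (\<Sum>l\<in>K. rho l - e l)
          \<ge> (\<Sum>j\<in>{1..n}. (n - r) - mu_col r L ({1..k} - K) j))) \<and>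
    (completable n k rho r n L \<longleftrightarrow> C0 \<and>
      (\<forall>J\<subseteq>{1..n}. \<forall>K\<subseteq>{1..k}. card J * (n - r)
          \<le> (\<Sum>l\<in>K. rho l - e l) + (\<Sum>l\<in>{1..k} - K. mu_sym r L J l))) \<and>
    (completable n k rho r n L \<longleftrightarrow> C0 \<and>
      (\<forall>J\<subseteq>{1..n}. \<forall>K\<subseteq>{1..k}. (\<Sum>l\<in>K. rho l - e l)
          \<le> card J * (n - r) + (\<Sum>j\<in>{1..n} - J. mu_col r L K j)))"
proof -
  have "r \<le> n" using \<open>r < n\<close> by simp
  note total = sum_rho_diff_occ[OF assms(6,5)]
  have swap: "\<forall>J\<subseteq>{1..n}. \<forall>K\<subseteq>{1..k}. (\<Sum>l\<in>K. mu_sym r L J l) = (\<Sum>j\<in>J. mu_col r L K j)"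
    by (intro allI impI sum_mu_sym_eq_sum_mu_col) (use finite_subset[OF _ finite_atLeastAtMost] in blast)+
  note hall = completable_iff_hall_condition[OF assms(6) \<open>r \<le> n\<close> assms(5)]
    and eq3 = left_hall_iff_compl_form[OF finite_atLeastAtMost total, of "mu_sym r L"]
    and eq5 = left_hall_iff_split_form[OF finite_atLeastAtMost, of "{1..n}" "n - r"
      "\<lambda>l. rho l - occ r n L l" "mu_sym r L"]
    and eq6 = split_forms_iff[OF finite_atLeastAtMost finite_atLeastAtMost total swap]
    and eq4 = right_hall_iff_compl_form[OF finite_atLeastAtMost total, of "mu_col r L"]
    and eq2 = right_hall_iff_split_form[OF finite_atLeastAtMost, of "{1..k}"
      "\<lambda>l. rho l - occ r n L l" "n - r" "mu_col r L"]
  show ?thesis unfolding C0_def e_def using hall eq2 eq3 eq4 eq5 eq6 by simp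
qed

end
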